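(* A matroid is binary if and only if it is a BULMAC matroid, i.e., if and only if it is isomorphic to the matroid on $E_m=\{1,\dots,m\}$ with rank function $S\mapsto I(X[S];Y,X[S^c])$ for some linear deterministic binary MAC $W$ (that is, $Y=AX[E_m]$ for some matrix $A$ over $\mathbb{F}_2$ with $m$ columns).
   Context: A binary MAC with $m$ users is a channel $W$ with input alphabet $\mathbb{F}_2^m$ and finite output alphabet. Let $X[E_m]$ have i.i.d. uniform components on $\mathbb{F}_2$ and let $Y$ be the output of $W$ with input $X[E_m]$; for $S\subseteq E_m$, $X[S]=(X[i])_{i\in S}$, $S^c=E_m\setminus S$. Mutual information is in bits. A linear deterministic binary MAC is one with $W(y\mid x)=1$ if $y=Ax$ and $0$ otherwise, for a fixed matrix $A$ over $\mathbb{F}_2$. A matroid is binary if it is isomorphic to the vector matroid of a matrix over $\mathbb{F}_2$. *)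

theory Defs
  imports "HOL-Probability.Probability_Mass_Function" "HOL-Library.Z2" "HOL-Library.Function_Algebras"
begin

definition matroid :: "'a set \<Rightarrow> ('a set \<Rightarrow> nat) \<Rightarrow> bool" where
  "matroid E r \<longleftrightarrow> finite E \<and>
     (\<forall>X. X \<subseteq> E \<longrightarrow> r X \<le> card X) \<and>
     (\<forall>X Y. X \<subseteq> Y \<and> Y \<subseteq> E \<longrightarrow> r X \<le> r Y) \<and>
     (\<forall>X Y. X \<subseteq> E \<and> Y \<subseteq> E \<longrightarrow> r (X \<union> Y) + r (X \<inter> Y) \<le> r X + r Y)"

definition f2scale :: "bit \<Rightarrow> (nat \<Rightarrow> bit) \<Rightarrow> (nat \<Rightarrow> bit)" where
  "f2scale c v = (\<lambda>i. c * v i)"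

lemma vector_space_f2scale: "vector_space f2scale"
  by unfold_locales (auto simp: f2scale_def algebra_simps fun_eq_iff)

definition mat_col :: "nat \<Rightarrow> (nat \<Rightarrow> nat \<Rightarrow> bit) \<Rightarrow> nat \<Rightarrow> (nat \<Rightarrow> bit)" where
  "mat_col k A j = (\<lambda>i. if i < k then A i j else 0)"

definition vec_matroid_rank :: "nat \<Rightarrow> (nat \<Rightarrow> nat \<Rightarrow> bit) \<Rightarrow> nat set \<Rightarrow> nat" where
  "vec_matroid_rank k A S = vector_space.dim f2scale (mat_col k A ` S)"

definition binary_matroid :: "'a set \<Rightarrow> ('a set \<Rightarrow> nat) \<Rightarrow> bool" where
  "binary_matroid E r \<longleftrightarrow> (\<exists>k m A f. bij_betw f E {1..m} \<and>
      (\<forall>S. S \<subseteq> E \<longrightarrow> r S = vec_matroid_rank k A (f ` S)))"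

definition mutual_info :: "'x pmf \<Rightarrow> ('x \<Rightarrow> 'u) \<Rightarrow> ('x \<Rightarrow> 'v) \<Rightarrow> real" where
  "mutual_info P g h =
     (let J = map_pmf (\<lambda>x. (g x, h x)) P; Pg = map_pmf g P; Ph = map_pmf h P in
      \<Sum>ab\<in>set_pmf J. pmf J ab * log 2 (pmf J ab / (pmf Pg (fst ab) * pmf Ph (snd ab))))"

definition mac_input :: "nat \<Rightarrow> (nat \<Rightarrow> bit) pmf" where
  "mac_input m = pmf_of_set (Pi\<^sub>E {1..m} (\<lambda>_. UNIV))"

definition lin_mac_out :: "nat \<Rightarrow> nat \<Rightarrow> (nat \<Rightarrow> nat \<Rightarrow> bit) \<Rightarrow> (nat \<Rightarrow> bit) \<Rightarrow> (nat \<Rightarrow> bit)" where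
  "lin_mac_out k m A x = (\<lambda>i. if i < k then (\<Sum>j\<in>{1..m}. A i j * x j) else 0)"

definition lin_mac_rank :: "nat \<Rightarrow> nat \<Rightarrow> (nat \<Rightarrow> nat \<Rightarrow> bit) \<Rightarrow> nat set \<Rightarrow> real" where
  "lin_mac_rank k m A S = mutual_info (mac_input m)
      (\<lambda>x. restrict x S)
      (\<lambda>x. (lin_mac_out k m A x, restrict x ({1..m} - S)))"

definition bulmac_matroid :: "'a set \<Rightarrow> ('a set \<Rightarrow> nat) \<Rightarrow> bool" where
  "bulmac_matroid E r \<longleftrightarrow> (\<exists>k m A f. bij_betw f E {1..m} \<and>
      (\<forall>S. S \<subseteq> E \<longrightarrow> real (r S) = lin_mac_rank k m A (f ` S)))"

end

theory Submission
  imports Defs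
begin

text \<open>Under the uniform input the three maps X \<mapsto> X[S], X \<mapsto> (A X, X[S^c]) and
  X \<mapsto> (X[S], A X, X[S^c]) are additive (after zero-extension), so all their fibers are cosets
  of their kernels and the mutual information is a ratio of fiber sizes:
  I(X[S]; Y, X[S^c]) = log 2 (2^m / (2^|S^c| * |ker A_S|)) = |S| - log 2 |ker A_S|, where A_S is
  the submatrix of the columns indexed by S. By the counting form of rank-nullity over F_2 this is
  the rank of A_S, i.e. the rank of S in the vector matroid of A.\<close>

lemma card_fiber_eq_card_kernel:
  fixes f :: "'a::group_add \<Rightarrow> 'b::group_add"
  assumes diff_closed: "\<And>x y. x \<in> G \<Longrightarrow> y \<in> G \<Longrightarrow> x - y \<in> G"
    and additive: "\<And>x y. x \<in> G \<Longrightarrow> y \<in> G \<Longrightarrow> f (x - y) = f x - f y"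
    and "x \<in> G"
  shows "card {y\<in>G. f y = f x} = card {y\<in>G. f y = 0}"
proof -
  have add_closed: "z + x \<in> G" if "z \<in> G" for z
    using diff_closed[OF that diff_closed[OF diff_closed[OF \<open>x \<in> G\<close> \<open>x \<in> G\<close>] \<open>x \<in> G\<close>]]
    by simp
  have "bij_betw (\<lambda>y. y - x) {y\<in>G. f y = f x} {y\<in>G. f y = 0}"
  proof (rule bij_betw_byWitness[where f' = "\<lambda>z. z + x"])
    show "(\<lambda>y. y - x) ` {y\<in>G. f y = f x} \<subseteq> {y\<in>G. f y = 0}"
      using assms by auto
    show "(\<lambda>z. z + x) ` {y\<in>G. f y = 0} \<subseteq> {y\<in>G. f y = f x}"
      using add_closed additive[of _ x] \<open>x \<in> G\<close> by (force simp: diff_eq_eq)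
  qed auto
  then show ?thesis by (rule bij_betw_same_card)
qed

lemma card_eq_card_image_mult_card_kernel:
  fixes f :: "'a::group_add \<Rightarrow> 'b::group_add"
  assumes "finite G"
    and "\<And>x y. x \<in> G \<Longrightarrow> y \<in> G \<Longrightarrow> x - y \<in> G"
    and "\<And>x y. x \<in> G \<Longrightarrow> y \<in> G \<Longrightarrow> f (x - y) = f x - f y"
  shows "card G = card (f ` G) * card {y\<in>G. f y = 0}"
proof -
  have "card G = (\<Sum>b\<in>f ` G. card {y\<in>G. f y = b})"
    unfolding card_eq_sum by (rule sum.image_gen[OF \<open>finite G\<close>])
  also have "\<dots> = (\<Sum>b\<in>f ` G. card {y\<in>G. f y = 0})"
    using card_fiber_eq_card_kernel[where G = G and f = f, OF assms(2,3)] by (intro sum.cong) auto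
  finally show ?thesis by simp
qed

lemma (in vector_space) card_span_independent:
  assumes "finite (UNIV :: 'a set)" and "finite B" and "independent B"
  shows "card (span B) = card (UNIV :: 'a set) ^ card B"
proof -
  define \<Phi> where "\<Phi> = (\<lambda>u. \<Sum>v\<in>B. scale (u v) v)"
  have "bij_betw \<Phi> (B \<rightarrow>\<^sub>E UNIV) (span B)"
  proof (rule bij_betw_imageI)
    show "inj_on \<Phi> (B \<rightarrow>\<^sub>E UNIV)"
    proof (rule inj_onI)
      fix u w assume u: "u \<in> B \<rightarrow>\<^sub>E UNIV" and w: "w \<in> B \<rightarrow>\<^sub>E UNIV" and "\<Phi> u = \<Phi> w"
      then have zero: "(\<Sum>v\<in>B. scale (u v - w v) v) = 0"
        by (simp add: \<Phi>_def scale_left_diff_distrib sum_subtractf)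
      have "u v = w v" if "v \<in> B" for v
        using independentD[OF assms(3,2) order_refl zero that] by simp
      then show "u = w" by (rule PiE_ext[OF u w])
    qed
    show "\<Phi> ` (B \<rightarrow>\<^sub>E UNIV) = span B"
    proof
      show "\<Phi> ` (B \<rightarrow>\<^sub>E UNIV) \<subseteq> span B"
        unfolding span_finite[OF assms(2)] \<Phi>_def by (rule image_mono) simp
      show "span B \<subseteq> \<Phi> ` (B \<rightarrow>\<^sub>E UNIV)"
      proof
        fix y assume "y \<in> span B"
        then obtain u where "y = \<Phi> u"
          unfolding span_finite[OF assms(2)] \<Phi>_def by blast
        also have "\<Phi> u = \<Phi> (restrict u B)"
          unfolding \<Phi>_def by (intro sum.cong refl) simp
        finally have "y = \<Phi> (restrict u B)" .
        moreover have "restrict u B \<in> B \<rightarrow>\<^sub>E UNIV" by simp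
        ultimately show "y \<in> \<Phi> ` (B \<rightarrow>\<^sub>E UNIV)" by blast
      qed
    qed
  qed
  then have "card (B \<rightarrow>\<^sub>E (UNIV :: 'a set)) = card (span B)"
    by (rule bij_betw_same_card)
  with assms(2) show ?thesis
    by (simp add: card_PiE)
qed

lemma (in vector_space) card_span:
  assumes "finite (UNIV :: 'a set)" and "finite C"
  shows "card (span C) = card (UNIV :: 'a set) ^ dim C"
proof -
  obtain B where B: "B \<subseteq> C" "independent B" "C \<subseteq> span B" "card B = dim C"
    using basis_exists by blast
  have "span B = span C"
  proof
    show "span B \<subseteq> span C" using B(1) by (rule span_mono)
    show "span C \<subseteq> span B" using span_mono[OF B(3)] by (simp only: span_span)
  qed
  then show ?thesis
    using card_span_independent[OF assms(1) finite_subset[OF B(1) assms(2)] B(2)] B(4) by simp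
qed

lemma (in module) span_image_eq_range_sum:
  assumes "finite S"
  shows "span (c ` S) = range (\<lambda>u. \<Sum>j\<in>S. scale (u j) (c j))" (is "_ = ?R")
proof
  show "?R \<subseteq> span (c ` S)"
    by (auto intro: span_sum span_scale span_base)
  have "subspace ?R"
    unfolding subspace_def
  proof (intro conjI ballI allI)
    show "0 \<in> ?R"
      by (rule range_eqI[where x = "\<lambda>_. 0"]) simp
    fix x y a assume "x \<in> ?R" "y \<in> ?R"
    then obtain u w where x: "x = (\<Sum>j\<in>S. scale (u j) (c j))" and y: "y = (\<Sum>j\<in>S. scale (w j) (c j))"
      by auto
    show "x + y \<in> ?R"
      using x y by (auto simp: sum.distrib scale_left_distrib intro!: range_eqI[where x = "\<lambda>j. u j + w j"])
    show "scale a x \<in> ?R"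
      using x by (auto simp: scale_sum_right intro!: range_eqI[where x = "\<lambda>j. a * u j"])
  qed
  moreover have "c ` S \<subseteq> ?R"
  proof
    fix v assume "v \<in> c ` S"
    then obtain i where "i \<in> S" "v = c i" by blast
    have "(\<Sum>j\<in>S. scale (if j = i then 1 else 0) (c j)) = (\<Sum>j\<in>S. if j = i then c j else 0)"
      by (intro sum.cong) auto
    then have "v = (\<Sum>j\<in>S. scale (if j = i then 1 else 0) (c j))"
      using \<open>i \<in> S\<close> \<open>v = c i\<close> assms by simp
    then show "v \<in> ?R"
      by (rule range_eqI[where x = "\<lambda>j. if j = i then 1 else 0"])
  qed
  ultimately show "span (c ` S) \<subseteq> ?R"
    by (intro span_minimal)
qed

lemma mutual_info_map_pmf:
  "mutual_info (map_pmf \<phi> P) g h = mutual_info P (g \<circ> \<phi>) (h \<circ> \<phi>)"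
  unfolding mutual_info_def map_pmf_comp comp_def ..

lemma pmf_map_pmf_of_set:
  assumes "finite \<Omega>" and "\<Omega> \<noteq> {}"
  shows "pmf (map_pmf f (pmf_of_set \<Omega>)) y = card {x\<in>\<Omega>. f x = y} / card \<Omega>"
proof -
  have "\<Omega> \<inter> f -` {y} = {x\<in>\<Omega>. f x = y}" by auto
  then show ?thesis using assms by (simp add: pmf_map measure_pmf_of_set)
qed

lemma mutual_info_uniform_constant_fibers:
  assumes fin: "finite \<Omega>" and ne: "\<Omega> \<noteq> {}" and inj: "inj_on (\<lambda>x. (g x, h x)) \<Omega>"
    and card_g: "\<And>x. x \<in> \<Omega> \<Longrightarrow> card {y\<in>\<Omega>. g y = g x} = a"
    and card_h: "\<And>x. x \<in> \<Omega> \<Longrightarrow> card {y\<in>\<Omega>. h y = h x} = b"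
  shows "mutual_info (pmf_of_set \<Omega>) g h = log 2 (card \<Omega> / (a * b))"
proof -
  define N where "N = real (card \<Omega>)"
  define gh where "gh x = (g x, h x)" for x
  have N_pos: "N > 0" using fin ne by (simp add: N_def card_gt_0_iff)
  have joint: "map_pmf gh (pmf_of_set \<Omega>) = pmf_of_set (gh ` \<Omega>)"
    using map_pmf_of_set_inj[OF inj[folded gh_def] ne fin] .
  have term_eq: "pmf (pmf_of_set (gh ` \<Omega>)) (gh x) *
      log 2 (pmf (pmf_of_set (gh ` \<Omega>)) (gh x) /
        (pmf (map_pmf g (pmf_of_set \<Omega>)) (fst (gh x)) * pmf (map_pmf h (pmf_of_set \<Omega>)) (snd (gh x))))
      = log 2 (N / (a * b)) / N" if "x \<in> \<Omega>" for x
  proof -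
    have "pmf (pmf_of_set (gh ` \<Omega>)) (gh x) = 1 / N"
      using that fin ne inj by (simp add: N_def gh_def card_image)
    moreover have "pmf (map_pmf g (pmf_of_set \<Omega>)) (g x) = a / N"
      "pmf (map_pmf h (pmf_of_set \<Omega>)) (h x) = b / N"
      using that card_g card_h by (simp_all add: N_def pmf_map_pmf_of_set[OF fin ne])
    moreover have "(1 / N) / ((a / N) * (b / N)) = N / (a * b)"
      using N_pos by (simp add: field_simps)
    ultimately show ?thesis by (simp add: gh_def del: pmf_of_set)
  qed
  have "mutual_info (pmf_of_set \<Omega>) g h = (\<Sum>ab\<in>gh ` \<Omega>. pmf (pmf_of_set (gh ` \<Omega>)) ab *
      log 2 (pmf (pmf_of_set (gh ` \<Omega>)) ab /
        (pmf (map_pmf g (pmf_of_set \<Omega>)) (fst ab) * pmf (map_pmf h (pmf_of_set \<Omega>)) (snd ab))))"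
    unfolding mutual_info_def Let_def gh_def[symmetric] joint using fin ne by (simp del: pmf_of_set)
  also have "\<dots> = (\<Sum>x\<in>\<Omega>. log 2 (N / (a * b)) / N)"
    unfolding sum.reindex[OF inj[folded gh_def]] comp_def by (intro sum.cong refl term_eq)
  also have "\<dots> = log 2 (N / (a * b))"
    using N_pos by (simp add: N_def)
  finally show ?thesis by (simp add: N_def)
qed

text \<open>The channel input is supported on extensional functions, which are undefined outside
  {1..m} and hence not closed under subtraction; the algebra is done on functions vanishing
  outside a set instead.\<close>

definition zero_outside :: "'a set \<Rightarrow> ('a \<Rightarrow> 'b::zero) \<Rightarrow> 'a \<Rightarrow> 'b" where
  "zero_outside S x = (\<lambda>j. if j \<in> S then x j else 0)"

definition vanishing_outside :: "'a set \<Rightarrow> ('a \<Rightarrow> 'b::zero) set" where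
  "vanishing_outside S = {x. \<forall>j. j \<notin> S \<longrightarrow> x j = 0}"

lemma zero_outside_in_vanishing_outside: "zero_outside S x \<in> vanishing_outside S"
  by (simp add: zero_outside_def vanishing_outside_def)

lemma zero_outside_diff:
  "zero_outside S (x - y) = zero_outside S x - zero_outside S (y :: 'a \<Rightarrow> 'b::group_add)"
  by (simp add: zero_outside_def fun_eq_iff)

lemma vanishing_outside_diff:
  fixes x y :: "'a \<Rightarrow> 'b::group_add"
  shows "x \<in> vanishing_outside S \<Longrightarrow> y \<in> vanishing_outside S \<Longrightarrow> x - y \<in> vanishing_outside S"
  by (simp add: vanishing_outside_def)

lemma zero_outside_eq_iff: "zero_outside S x = zero_outside S y \<longleftrightarrow> (\<forall>j\<in>S. x j = y j)"
  by (auto simp: zero_outside_def fun_eq_iff)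

lemma restrict_eq_iff: "restrict x S = restrict y S \<longleftrightarrow> (\<forall>j\<in>S. x j = y j)"
  by (auto simp: restrict_def fun_eq_iff)

lemma vanishing_outside_eqI:
  assumes "x \<in> vanishing_outside I" and "y \<in> vanishing_outside I" and "\<And>j. j \<in> I \<Longrightarrow> x j = y j"
  shows "x = y"
proof
  fix j show "x j = y j"
    using assms by (cases "j \<in> I") (auto simp: vanishing_outside_def)
qed

lemma bij_betw_zero_outside_PiE:
  "bij_betw (zero_outside S) (S \<rightarrow>\<^sub>E UNIV) (vanishing_outside S)"
  by (rule bij_betw_byWitness[where f' = "\<lambda>x. restrict x S"])
     (auto simp: zero_outside_def vanishing_outside_def fun_eq_iff PiE_iff extensional_def)

lemma card_vanishing_outside:
  assumes "finite (UNIV :: 'b set)" and "finite S"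
  shows "card (vanishing_outside S :: ('a \<Rightarrow> 'b::zero) set) = card (UNIV :: 'b set) ^ card S"
proof -
  have "card (S \<rightarrow>\<^sub>E (UNIV :: 'b set)) = card (vanishing_outside S :: ('a \<Rightarrow> 'b) set)"
    by (rule bij_betw_same_card[OF bij_betw_zero_outside_PiE])
  then show ?thesis using assms by (simp add: card_PiE card_gt_0_iff)
qed

lemma finite_vanishing_outside:
  assumes "finite (UNIV :: 'b set)" and "finite S"
  shows "finite (vanishing_outside S :: ('a \<Rightarrow> 'b::zero) set)"
  by (rule card_ge_0_finite) (simp add: card_vanishing_outside[OF assms] finite_UNIV_card_ge_0[OF assms(1)])

lemma card_restrict_fiber:
  fixes x :: "'a \<Rightarrow> 'b::group_add"
  assumes "finite (UNIV :: 'b set)" and "finite I" and "S \<subseteq> I" and "x \<in> vanishing_outside I"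
  shows "card {y \<in> vanishing_outside I. restrict y S = restrict x S} = card (UNIV :: 'b set) ^ card (I - S)"
proof -
  have "card {y \<in> vanishing_outside I. restrict y S = restrict x S} =
      card {y \<in> vanishing_outside I. zero_outside S y = (0 :: 'a \<Rightarrow> 'b)}"
    unfolding restrict_eq_iff zero_outside_eq_iff[symmetric]
    by (rule card_fiber_eq_card_kernel[where f = "zero_outside S", OF vanishing_outside_diff zero_outside_diff assms(4)])
  also have "{y \<in> vanishing_outside I. zero_outside S y = 0} = (vanishing_outside (I - S) :: ('a \<Rightarrow> 'b) set)"
    using assms(3) by (auto simp: vanishing_outside_def zero_outside_def fun_eq_iff)
  also have "card (vanishing_outside (I - S) :: ('a \<Rightarrow> 'b) set) = card (UNIV :: 'b set) ^ card (I - S)"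
    using assms(1,2) by (simp add: card_vanishing_outside)
  finally show ?thesis .
qed

lemma UNIV_bit: "(UNIV :: bit set) = {0, 1}"
  using bit.exhaust by auto

lemma finite_UNIV_bit: "finite (UNIV :: bit set)"
  by (simp add: UNIV_bit)

lemma card_UNIV_bit: "card (UNIV :: bit set) = 2"
  by (simp add: UNIV_bit)

interpretation f2: vector_space f2scale
  by (rule vector_space_f2scale)

lemma lin_mac_out_eq_sum: "lin_mac_out k m A x = (\<Sum>j\<in>{1..m}. f2scale (x j) (mat_col k A j))"
proof -
  have "(\<Sum>j\<in>J. F j) i = (\<Sum>j\<in>J. F j i)" for J and F :: "nat \<Rightarrow> nat \<Rightarrow> bit" and i
    by (induction J rule: infinite_finite_induct) auto
  then show ?thesis
    by (auto simp: fun_eq_iff lin_mac_out_def f2scale_def mat_col_def mult.commute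
             simp del: add_bit_eq_xor mult_bit_eq_and)
qed

lemma lin_mac_out_diff: "lin_mac_out k m A (x - y) = lin_mac_out k m A x - lin_mac_out k m A y"
  by (simp add: lin_mac_out_def fun_eq_iff ring_distribs sum.distrib
           del: add_bit_eq_xor mult_bit_eq_and)

lemma lin_mac_out_zero_outside: "lin_mac_out k m A (zero_outside {1..m} x) = lin_mac_out k m A x"
  by (auto simp: lin_mac_out_def zero_outside_def fun_eq_iff intro!: sum.cong)

lemma lin_mac_out_vanishing_outside:
  assumes "S \<subseteq> {1..m}" and "x \<in> vanishing_outside S"
  shows "lin_mac_out k m A x = (\<Sum>j\<in>S. f2scale (x j) (mat_col k A j))"
  unfolding lin_mac_out_eq_sum using assms
  by (intro sum.mono_neutral_right) (auto simp: vanishing_outside_def)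

lemma lin_mac_out_image:
  assumes "S \<subseteq> {1..m}"
  shows "lin_mac_out k m A ` vanishing_outside S = f2.span (mat_col k A ` S)"
proof -
  have "finite S" using assms finite_subset by blast
  have "lin_mac_out k m A ` vanishing_outside S = range (\<lambda>u. \<Sum>j\<in>S. f2scale (u j) (mat_col k A j))"
  proof
    show "lin_mac_out k m A ` vanishing_outside S \<subseteq> range (\<lambda>u. \<Sum>j\<in>S. f2scale (u j) (mat_col k A j))"
    proof
      fix v assume "v \<in> lin_mac_out k m A ` vanishing_outside S"
      then obtain x where "x \<in> vanishing_outside S" "v = lin_mac_out k m A x" by blast
      then have "v = (\<Sum>j\<in>S. f2scale (x j) (mat_col k A j))"
        using lin_mac_out_vanishing_outside[OF assms] by blast
      then show "v \<in> range (\<lambda>u. \<Sum>j\<in>S. f2scale (u j) (mat_col k A j))"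
        by (rule range_eqI[where x = x])
    qed
    show "range (\<lambda>u. \<Sum>j\<in>S. f2scale (u j) (mat_col k A j)) \<subseteq> lin_mac_out k m A ` vanishing_outside S"
    proof
      fix v assume "v \<in> range (\<lambda>u. \<Sum>j\<in>S. f2scale (u j) (mat_col k A j))"
      then obtain u where v: "v = (\<Sum>j\<in>S. f2scale (u j) (mat_col k A j))" by blast
      have "lin_mac_out k m A (zero_outside S u) = (\<Sum>j\<in>S. f2scale (zero_outside S u j) (mat_col k A j))"
        by (rule lin_mac_out_vanishing_outside[OF assms zero_outside_in_vanishing_outside])
      also have "\<dots> = v"
        unfolding v by (intro sum.cong) (simp_all add: zero_outside_def)
      finally show "v \<in> lin_mac_out k m A ` vanishing_outside S"
        using zero_outside_in_vanishing_outside by (rule image_eqI[OF sym])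
    qed
  qed
  also have "\<dots> = f2.span (mat_col k A ` S)"
    by (rule f2.span_image_eq_range_sum[symmetric]) fact
  finally show ?thesis .
qed

lemma card_lin_mac_out_kernel:
  assumes "S \<subseteq> {1..m}"
  shows "card {x \<in> vanishing_outside S. lin_mac_out k m A x = 0} * 2 ^ vec_matroid_rank k A S = 2 ^ card S"
proof -
  have "finite S" using assms finite_subset by blast
  have "card (vanishing_outside S :: (nat \<Rightarrow> bit) set) =
      card (lin_mac_out k m A ` vanishing_outside S) * card {x \<in> vanishing_outside S. lin_mac_out k m A x = 0}"
    by (rule card_eq_card_image_mult_card_kernel)
       (simp_all add: finite_vanishing_outside finite_UNIV_bit \<open>finite S\<close> vanishing_outside_diff lin_mac_out_diff)
  moreover have "card (vanishing_outside S :: (nat \<Rightarrow> bit) set) = 2 ^ card S"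
    by (simp add: card_vanishing_outside finite_UNIV_bit card_UNIV_bit \<open>finite S\<close>)
  moreover have "card (lin_mac_out k m A ` vanishing_outside S) = 2 ^ vec_matroid_rank k A S"
    unfolding lin_mac_out_image[OF assms] vec_matroid_rank_def
    using f2.card_span[OF finite_UNIV_bit] \<open>finite S\<close> by (simp add: card_UNIV_bit)
  ultimately show ?thesis by (simp add: mult.commute)
qed

lemma lin_mac_rank_eq_mutual_info_vanishing_outside:
  assumes "S \<subseteq> {1..m}"
  shows "lin_mac_rank k m A S = mutual_info (pmf_of_set (vanishing_outside {1..m}))
      (\<lambda>x. restrict x S) (\<lambda>x. (lin_mac_out k m A x, restrict x ({1..m} - S)))"
    (is "_ = mutual_info _ ?g ?h")
proof -
  have g_eq: "?g \<circ> zero_outside {1..m} = ?g"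
    using assms by (auto simp: fun_eq_iff restrict_def zero_outside_def)
  have h_eq: "?h \<circ> zero_outside {1..m} = ?h"
    unfolding comp_def lin_mac_out_zero_outside by (auto simp: fun_eq_iff restrict_def zero_outside_def)
  have "lin_mac_rank k m A S = mutual_info (mac_input m) (?g \<circ> zero_outside {1..m}) (?h \<circ> zero_outside {1..m})"
    by (simp only: lin_mac_rank_def g_eq h_eq)
  also have "\<dots> = mutual_info (map_pmf (zero_outside {1..m}) (mac_input m)) ?g ?h"
    by (rule mutual_info_map_pmf[symmetric])
  also have "map_pmf (zero_outside {1..m}) (mac_input m) = pmf_of_set (vanishing_outside {1..m})"
    unfolding mac_input_def
    by (rule map_pmf_of_set_bij_betw[OF bij_betw_zero_outside_PiE])
       (simp_all add: PiE_eq_empty_iff finite_PiE finite_UNIV_bit)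
  finally show ?thesis .
qed

lemma card_lin_mac_out_fiber:
  assumes S: "S \<subseteq> {1..m}" and x: "x \<in> vanishing_outside {1..m}"
  shows "card {y \<in> vanishing_outside {1..m}.
      (lin_mac_out k m A y, restrict y ({1..m} - S)) = (lin_mac_out k m A x, restrict x ({1..m} - S))} =
    card {y \<in> vanishing_outside S. lin_mac_out k m A y = 0}"
proof -
  let ?V = "vanishing_outside {1..m} :: (nat \<Rightarrow> bit) set"
  let ?f = "\<lambda>y. (lin_mac_out k m A y, zero_outside ({1..m} - S) y)"
  have f_diff: "?f (y - z) = ?f y - ?f z" for y z
    by (simp add: lin_mac_out_diff zero_outside_diff)
  have "card {y \<in> ?V. (lin_mac_out k m A y, restrict y ({1..m} - S)) =
      (lin_mac_out k m A x, restrict x ({1..m} - S))} = card {y \<in> ?V. ?f y = ?f x}"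
    by (simp add: restrict_eq_iff zero_outside_eq_iff)
  also have "\<dots> = card {y \<in> ?V. ?f y = 0}"
    by (rule card_fiber_eq_card_kernel[where f = ?f, OF vanishing_outside_diff f_diff x])
  also have "{y \<in> ?V. ?f y = 0} = {y \<in> vanishing_outside S. lin_mac_out k m A y = 0}"
    using S by (auto simp: vanishing_outside_def zero_outside_def fun_eq_iff zero_prod_def)
  finally show ?thesis .
qed

lemma inj_on_restrict_complement:
  assumes "S \<subseteq> I"
  shows "inj_on (\<lambda>x. (restrict x S, restrict x (I - S))) (vanishing_outside I :: ('a \<Rightarrow> 'b::zero) set)"
proof (rule inj_onI)
  fix x y :: "'a \<Rightarrow> 'b" assume x: "x \<in> vanishing_outside I" and y: "y \<in> vanishing_outside I"
    and eq: "(restrict x S, restrict x (I - S)) = (restrict y S, restrict y (I - S))"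
  have "x j = y j" if "j \<in> I" for j
    using eq that by (cases "j \<in> S") (auto simp: restrict_eq_iff)
  then show "x = y"
    by (rule vanishing_outside_eqI[OF x y])
qed

lemma lin_mac_rank_eq_vec_matroid_rank:
  assumes S: "S \<subseteq> {1..m}"
  shows "lin_mac_rank k m A S = real (vec_matroid_rank k A S)"
proof -
  let ?V = "vanishing_outside {1..m} :: (nat \<Rightarrow> bit) set"
  let ?T = "{1..m} - S"
  define K where "K = card {x \<in> vanishing_outside S. lin_mac_out k m A x = 0}"
  define r where "r = vec_matroid_rank k A S"
  have inj: "inj_on (\<lambda>x. (restrict x S, (lin_mac_out k m A x, restrict x ?T))) ?V"
    using inj_on_restrict_complement[OF S] by (auto simp: inj_on_def)
  have "lin_mac_rank k m A S = log 2 (card ?V / (real (2 ^ card ?T) * real K))"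
    unfolding lin_mac_rank_eq_mutual_info_vanishing_outside[OF S]
  proof (rule mutual_info_uniform_constant_fibers[OF _ _ inj])
    show "finite ?V"
      by (simp add: finite_vanishing_outside finite_UNIV_bit)
    show "?V \<noteq> {}"
      by (auto simp: vanishing_outside_def)
    show "card {y \<in> ?V. restrict y S = restrict x S} = 2 ^ card ?T" if "x \<in> ?V" for x
      using card_restrict_fiber[OF finite_UNIV_bit _ S that] by (simp add: card_UNIV_bit)
    show "card {y \<in> ?V. (lin_mac_out k m A y, restrict y ?T) = (lin_mac_out k m A x, restrict x ?T)} = K"
      if "x \<in> ?V" for x
      unfolding K_def by (rule card_lin_mac_out_fiber[OF S that])
  qed
  also have "card ?V / (real (2 ^ card ?T) * real K) = (2::real) ^ r"
  proof -
    have kernel: "K * 2 ^ r = 2 ^ card S"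
      unfolding K_def r_def by (rule card_lin_mac_out_kernel[OF S])
    then have "K \<noteq> 0"
      by (metis mult_eq_0_iff power_not_zero zero_neq_numeral)
    have "card S + card ?T = m"
      using S card_mono[OF _ S] finite_subset[OF S] by (simp add: card_Diff_subset)
    then have "card ?V = K * 2 ^ r * 2 ^ card ?T"
      by (simp add: card_vanishing_outside finite_UNIV_bit card_UNIV_bit kernel flip: power_add)
    with \<open>K \<noteq> 0\<close> show ?thesis
      by (simp add: field_simps)
  qed
  finally show ?thesis
    unfolding r_def by (simp add: log_nat_power)
qed

theorem mainTheorem3:
  fixes E :: "'a set" and r :: "'a set \<Rightarrow> nat"
  assumes "matroid E r"
  shows "binary_matroid E r \<longleftrightarrow> bulmac_matroid E r"
proof -
  have "(\<forall>S. S \<subseteq> E \<longrightarrow> r S = vec_matroid_rank k A (f ` S)) \<longleftrightarrow>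
        (\<forall>S. S \<subseteq> E \<longrightarrow> real (r S) = lin_mac_rank k m A (f ` S))"
    if "bij_betw f E {1..m}" for k m A and f :: "'a \<Rightarrow> nat"
  proof -
    have "f ` S \<subseteq> {1..m}" if "S \<subseteq> E" for S
      using that \<open>bij_betw f E {1..m}\<close> by (auto simp: bij_betw_def)
    then show ?thesis
      using lin_mac_rank_eq_vec_matroid_rank by auto
  qed
  then show ?thesis
    unfolding binary_matroid_def bulmac_matroid_def by meson
qed

end
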